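(* Let $\mathcal{A}\in\mathbb{C}^{n\times n\times n\times n}$ be a CPS tensor with orthogonal matrix decomposition $\mathcal{A}=\sum_{i=1}^r\lambda_iE_i\otimes\bar E_i$, where $r=rank_m(\mathcal{A})$, $0\ne\lambda_i\in\mathbb{R}$, $E_i$ complex symmetric, $\langle E_i,E_j\rangle=\delta_{ij}$. Then: (1) if every $E_i$ has rank one, then $\mathcal{A}=\sum_{i=1}^r\lambda_i' p_i\otimes p_i\otimes\bar p_i\otimes\bar p_i$ for some $\lambda_i'\in\mathbb{R}$, $p_i\in\mathbb{C}^n$ with $p_i^Hp_j=0$ for all $i\neq j$; (2) if $R=\max_i\operatorname{rank}(E_i)$, then $r\le\operatorname{rank}(\mathcal{A})\le rR^2$; (3) if $r=1$, i.e. $\mathcal{A}=\lambda E\otimes\bar E$ with $\lambda\ne0$, and $\operatorname{rank}(E)=R$, then $\operatorname{rank}(\mathcal{A})=R^2$. Here $\operatorname{rank}(\mathcal{A})$ denotes the CP rank over $\mathbb{C}$.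
   Context: A tensor $\mathcal{A}\in\mathbb{C}^{n\times n\times n\times n}$ is conjugate partial-symmetric (CPS) if $\mathcal{A}_{ijkl}=\overline{\mathcal{A}_{klij}}$ and $\mathcal{A}_{ijkl}=\mathcal{A}_{jikl}=\mathcal{A}_{ijlk}$ for all indices. For $E,F\in\mathbb{C}^{n\times n}$, $(E\otimes F)_{ijkl}=E_{ij}F_{kl}$; $\langle X,Y\rangle=\sum_{ij}X_{ij}\overline{Y_{ij}}$. $rank_m(\mathcal{A})=\min\{r:\mathcal{A}=\sum_{i=1}^r\lambda_iE_i\otimes\bar E_i,\ \lambda_i\in\mathbb{R},\ E_i=E_i^T\in\mathbb{C}^{n\times n}\}$. The CP rank $\operatorname{rank}(\mathcal{A})$ is the smallest $r$ with $\mathcal{A}=\sum_{i=1}^r u_i^1\otimes u_i^2\otimes u_i^3\otimes u_i^4$, $u_i^j\in\mathbb{C}^n$, where $(u\otimes v\otimes w\otimes z)_{ijkl}=u_iv_jw_kz_l$. *)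

theory Defs
  imports "HOL-Analysis.Analysis"
begin

type_synonym 'n tensor4 = "'n \<Rightarrow> 'n \<Rightarrow> 'n \<Rightarrow> 'n \<Rightarrow> complex"

definition CPS :: "('n::finite) tensor4 \<Rightarrow> bool" where
  "CPS A \<longleftrightarrow> (\<forall>i j k l. A i j k l = cnj (A k l i j) \<and> A i j k l = A j i k l \<and> A i j k l = A i j l k)"

definition kron :: "complex^'n^'n \<Rightarrow> complex^'n^'n \<Rightarrow> ('n::finite) tensor4" where
  "kron E F = (\<lambda>i j k l. E $ i $ j * F $ k $ l)"

definition mconj :: "complex^'n^'m \<Rightarrow> complex^'n^'m" where
  "mconj E = (\<chi> i j. cnj (E $ i $ j))"

definition minner :: "complex^'n^'n \<Rightarrow> complex^'n^'n \<Rightarrow> complex" where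
  "minner X Y = (\<Sum>i\<in>UNIV. \<Sum>j\<in>UNIV. X $ i $ j * cnj (Y $ i $ j))"

definition hprod :: "complex^'n \<Rightarrow> complex^'n \<Rightarrow> complex" where
  "hprod p q = (\<Sum>k\<in>UNIV. cnj (p $ k) * q $ k)"

definition rank_m :: "('n::finite) tensor4 \<Rightarrow> nat" where
  "rank_m A = (LEAST r. \<exists>(lam :: nat \<Rightarrow> real) (E :: nat \<Rightarrow> complex^'n^'n).
      (\<forall>i<r. transpose (E i) = E i) \<and>
      A = (\<lambda>a b c d. \<Sum>i<r. complex_of_real (lam i) * kron (E i) (mconj (E i)) a b c d))"

definition cp_rank :: "('n::finite) tensor4 \<Rightarrow> nat" where
  "cp_rank A = (LEAST r. \<exists>u1 u2 u3 u4 :: nat \<Rightarrow> complex^'n.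
      A = (\<lambda>a b c d. \<Sum>i<r. u1 i $ a * u2 i $ b * u3 i $ c * u4 i $ d))"

end

theory Submission
  imports Defs
begin

text \<open>Flatten A to the n^2 x n^2 matrix with rows (a,b) and columns (c,d). A CP decomposition of
  length s writes every column as a combination of the s vectors u1 (x) u2, so any independent family
  in the column space has at most s members. Contracting the columns against E_j recovers
  lam_j E_j, and orthonormal matrices are independent, whence r <= rank A. For a single term
  lam E (x) conj E, regrouping the indices yields the R^2 independent columns g_i (x) conj g_j built
  from R independent rows g_i of E. The upper bounds come from splitting each E_i into rank E_i
  outer products. For (1), a symmetric rank-one complex matrix is p p^T, and
  <p p^T, q q^T> = conj (p^H q)^2, so orthonormality forces p_i^H p_j = 0.\<close>

definition independent_family :: "('i \<Rightarrow> 'a::field^'n) \<Rightarrow> 'i set \<Rightarrow> bool" where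
  "independent_family F I \<longleftrightarrow> (\<forall>c. (\<Sum>i\<in>I. c i *s F i) = 0 \<longrightarrow> (\<forall>i\<in>I. c i = 0))"

lemma independent_familyD:
  "independent_family F I \<Longrightarrow> (\<Sum>i\<in>I. c i *s F i) = 0 \<Longrightarrow> i \<in> I \<Longrightarrow> c i = 0"
  unfolding independent_family_def by blast

lemma independent_family_inj_on:
  fixes F :: "'i \<Rightarrow> 'a::field^'n"
  assumes fin: "finite I" and ind: "independent_family F I"
  shows "inj_on F I"
proof (rule inj_onI, rule ccontr)
  fix i j assume ij: "i \<in> I" "j \<in> I" "F i = F j" "i \<noteq> j"
  define c :: "'i \<Rightarrow> 'a" where "c k = (if k = i then 1 else if k = j then -1 else 0)" for k
  have "(\<Sum>k\<in>I. c k *s F k) = (\<Sum>k\<in>{i,j}. c k *s F k)"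
    by (rule sum.mono_neutral_right) (use fin ij in \<open>auto simp: c_def\<close>)
  also have "\<dots> = 0" using ij by (simp add: c_def)
  finally have "c i = 0" by (rule independent_familyD[OF ind _ ij(1)])
  then show False by (simp add: c_def)
qed

lemma independent_family_image:
  assumes fin: "finite I" and ind: "independent_family F I"
  shows "vec.independent (F ` I)"
  unfolding vec.independent_explicit
proof (intro conjI allI impI)
  show "finite (F ` I)" using fin by simp
  fix c assume "(\<Sum>v\<in>F ` I. c v *s v) = 0"
  then have "(\<Sum>i\<in>I. c (F i) *s F i) = 0"
    using independent_family_inj_on[OF assms] by (simp add: sum.reindex)
  then show "\<forall>v\<in>F ` I. c v = 0" using ind by (auto dest: independent_familyD)
qed

lemma independent_family_outer:
  fixes g :: "'i \<Rightarrow> 'a::field^'m" and h :: "'j \<Rightarrow> 'a^'n"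
  assumes fin: "finite I" "finite J"
    and g: "independent_family g I" and h: "independent_family h J"
  shows "independent_family (\<lambda>(i, j). \<chi> p. g i $ fst p * h j $ snd p) (I \<times> J)"
  unfolding independent_family_def
proof (intro allI impI ballI)
  fix c q
  assume c: "(\<Sum>q\<in>I \<times> J. c q *s (case q of (i, j) \<Rightarrow> \<chi> p. g i $ fst p * h j $ snd p)) = 0"
    and q: "q \<in> I \<times> J"
  have row_zero: "(\<Sum>j\<in>J. c (i, j) * h j $ b) = 0" if i: "i \<in> I" for i b
  proof -
    have "(\<Sum>i\<in>I. (\<Sum>j\<in>J. c (i, j) * h j $ b) *s g i) $ a = 0" for a
    proof -
      have "(\<Sum>q\<in>I \<times> J. c q *s (case q of (i, j) \<Rightarrow> \<chi> p. g i $ fst p * h j $ snd p)) $ (a, b) = 0"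
        using c by simp
      then have "(\<Sum>i\<in>I. \<Sum>j\<in>J. c (i, j) * (g i $ a * h j $ b)) = 0"
        by (simp add: sum.cartesian_product case_prod_beta)
      then show ?thesis by (simp add: sum_distrib_left sum_distrib_right ac_simps)
    qed
    then have "(\<Sum>i\<in>I. (\<Sum>j\<in>J. c (i, j) * h j $ b) *s g i) = 0" by (simp add: vec_eq_iff)
    then show ?thesis by (rule independent_familyD[OF g _ i])
  qed
  obtain i j where ij: "q = (i, j)" "i \<in> I" "j \<in> J" using q by blast
  have "(\<Sum>j\<in>J. c (i, j) *s h j) = 0"
    using row_zero[OF ij(2)] by (simp add: vec_eq_iff ac_simps)
  then show "c q = 0" using h ij by (auto dest: independent_familyD)
qed

lemma independent_family_cnj:
  fixes g :: "'i \<Rightarrow> complex^'n"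
  assumes "independent_family g I"
  shows "independent_family (\<lambda>i. \<chi> a. cnj (g i $ a)) I"
  unfolding independent_family_def
proof (intro allI impI ballI)
  fix c i
  assume c: "(\<Sum>i\<in>I. c i *s (\<chi> a. cnj (g i $ a))) = 0" and i: "i \<in> I"
  have "(\<Sum>i\<in>I. cnj (c i) *s g i) = 0"
  proof (rule vec_eq_iff[THEN iffD2], rule allI)
    fix a
    have "cnj ((\<Sum>i\<in>I. c i *s (\<chi> a. cnj (g i $ a))) $ a) = 0" using c by simp
    then show "(\<Sum>i\<in>I. cnj (c i) *s g i) $ a = 0 $ a" by simp
  qed
  then have "cnj (c i) = 0" by (rule independent_familyD[OF assms _ i])
  then show "c i = 0" by simp
qed

definition vec_of_matrix :: "'a^'n^'m \<Rightarrow> 'a^('m \<times> 'n)" where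
  "vec_of_matrix M = (\<chi> p. M $ fst p $ snd p)"

lemma independent_family_orthonormal:
  fixes E :: "'i \<Rightarrow> complex^'n::finite^'n"
  assumes orth: "\<forall>i\<in>I. \<forall>j\<in>I. minner (E i) (E j) = (if i = j then 1 else 0)" and "finite I"
  shows "independent_family (\<lambda>i. vec_of_matrix (E i)) I"
  unfolding independent_family_def
proof (intro allI impI ballI)
  fix c j assume c: "(\<Sum>i\<in>I. c i *s vec_of_matrix (E i)) = 0" and j: "j \<in> I"
  have comb: "(\<Sum>i\<in>I. c i * E i $ a $ b) = 0" for a b
    using arg_cong[OF c, of "\<lambda>v. v $ (a, b)"] by (simp add: vec_of_matrix_def)
  have "(\<Sum>i\<in>I. c i * minner (E i) (E j)) = (\<Sum>i\<in>I. if i = j then c i else 0)"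
    by (rule sum.cong) (use orth j in auto)
  then have "c j = (\<Sum>i\<in>I. c i * minner (E i) (E j))"
    using j \<open>finite I\<close> by simp
  also have "\<dots> = (\<Sum>a\<in>UNIV. \<Sum>b\<in>UNIV. (\<Sum>i\<in>I. c i * E i $ a $ b) * cnj (E j $ a $ b))"
    unfolding minner_def sum_distrib_left sum_distrib_right
    by (subst sum.swap, rule sum.cong, simp, subst sum.swap) (simp add: mult_ac)
  finally show "c j = 0" by (simp add: comb)
qed

lemma obtain_row_basis:
  fixes E :: "'a::field^'n^'m"
  obtains g :: "nat \<Rightarrow> 'a^'n" and h :: "nat \<Rightarrow> 'm"
  where "\<And>k. k < rank E \<Longrightarrow> g k = row (h k) E"
    and "independent_family g {..<rank E}"
    and "\<And>a. row a E \<in> vec.span (g ` {..<rank E})"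
proof -
  obtain B where B: "B \<subseteq> rows E" "vec.independent B" "rows E \<subseteq> vec.span B"
      and card_B: "card B = rank E"
    using vec.basis_exists[of "rows E"] by (metis row_rank_def_gen)
  obtain g where g: "bij_betw g {..<rank E} B"
    using ex_bij_betw_nat_finite[OF vec.finiteI_independent[OF B(2)]]
    by (auto simp: lessThan_atLeast0 card_B)
  have "\<exists>a. g k = row a E" if "k < rank E" for k
    using that g B(1) by (auto simp: bij_betw_def rows_def)
  then obtain h where h: "\<And>k. k < rank E \<Longrightarrow> g k = row (h k) E" by metis
  have "independent_family g {..<rank E}"
    unfolding independent_family_def
  proof (intro allI impI ballI)
    fix d k assume d: "(\<Sum>k<rank E. d k *s g k) = 0" and k: "k \<in> {..<rank E}"
    let ?c = "\<lambda>v. d (the_inv_into {..<rank E} g v)"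
    have "(\<Sum>v\<in>B. ?c v *s v) = (\<Sum>k<rank E. ?c (g k) *s g k)"
      using sum.reindex_bij_betw[OF g, of "\<lambda>v. ?c v *s v"] by simp
    also have "\<dots> = 0"
      using d g by (simp add: bij_betw_def the_inv_into_f_f)
    finally have "?c (g k) = 0"
      using B(2) g k by (auto simp: vec.independent_explicit bij_betw_def)
    then show "d k = 0" using g k by (simp add: bij_betw_def the_inv_into_f_f)
  qed
  moreover have "row a E \<in> vec.span (g ` {..<rank E})" for a
    using B(3) g by (auto simp: rows_def bij_betw_def)
  ultimately show ?thesis using h that by blast
qed

lemma rank_decomposition:
  fixes E :: "'a::field^'n^'m"
  shows "\<exists>(x :: nat \<Rightarrow> 'a^'m) (y :: nat \<Rightarrow> 'a^'n).
    \<forall>a b. E $ a $ b = (\<Sum>k<rank E. x k $ a * y k $ b)"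
proof -
  obtain g :: "nat \<Rightarrow> 'a^'n" and h
    where ind: "independent_family g {..<rank E}"
      and span: "\<And>a. row a E \<in> vec.span (g ` {..<rank E})"
    using obtain_row_basis by metis
  have inj: "inj_on g {..<rank E}" using independent_family_inj_on[OF _ ind] by simp
  have "\<exists>u. row a E = (\<Sum>k<rank E. u k *s g k)" for a
  proof -
    obtain u where "row a E = (\<Sum>v\<in>g ` {..<rank E}. u v *s v)"
      using span[of a] by (auto simp: vec.span_finite)
    then have "row a E = (\<Sum>k<rank E. (u \<circ> g) k *s g k)" using inj by (simp add: sum.reindex)
    then show ?thesis by blast
  qed
  then obtain U where U: "\<And>a. row a E = (\<Sum>k<rank E. U a k *s g k)" by metis
  have "E $ a $ b = (\<Sum>k<rank E. (\<chi> a. U a k) $ a * g k $ b)" for a b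
    using arg_cong[OF U[of a], of "\<lambda>v. v $ b"] by (simp add: row_def)
  then show ?thesis by (intro exI[of _ "\<lambda>k. \<chi> a. U a k"] exI[of _ g]) simp
qed

lemma symmetric_rank_one_eq_outer_square:
  fixes E :: "complex^'n^'n"
  assumes sym: "transpose E = E" and rank: "rank E = 1"
  obtains p where "\<And>a b. E $ a $ b = p $ a * p $ b"
proof -
  obtain x y :: "nat \<Rightarrow> complex^'n" where "\<forall>a b. E $ a $ b = (\<Sum>k<rank E. x k $ a * y k $ b)"
    using rank_decomposition[of E] by blast
  then have xy: "E $ a $ b = x 0 $ a * y 0 $ b" for a b by (simp add: rank)
  show ?thesis
  proof (cases "y 0 = 0")
    case True
    then show ?thesis using xy by (intro that[of 0]) simp
  next
    case False
    then obtain b0 where b0: "y 0 $ b0 \<noteq> 0" by (auto simp: vec_eq_iff)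
    define t where "t = x 0 $ b0 / y 0 $ b0"
    have "x 0 $ a * y 0 $ b0 = x 0 $ b0 * y 0 $ a" for a
      using arg_cong[OF sym, of "\<lambda>M. M $ b0 $ a"] by (simp add: transpose_def xy mult.commute)
    then have x: "x 0 $ a = t * y 0 $ a" for a
      using b0 by (simp add: t_def field_simps)
    have "E $ a $ b = (csqrt t * y 0 $ a) * (csqrt t * y 0 $ b)" for a b
    proof -
      have "csqrt t * csqrt t = t" using power2_csqrt[of t] by (simp only: power2_eq_square)
      then show ?thesis by (simp add: xy x algebra_simps)
    qed
    then show ?thesis by (intro that[of "csqrt t *s y 0"]) simp
  qed
qed

lemma minner_outer_squares:
  assumes "\<And>a b. E $ a $ b = p $ a * p $ b" and "\<And>a b. F $ a $ b = q $ a * q $ b"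
  shows "minner E F = (cnj (hprod p q))\<^sup>2"
proof -
  have "cnj (hprod p q) = (\<Sum>a\<in>UNIV. p $ a * cnj (q $ a))"
    by (simp add: hprod_def mult.commute)
  then show ?thesis
    by (simp add: minner_def assms power2_eq_square sum_product mult_ac)
qed

definition has_cp_decomposition :: "('n::finite) tensor4 \<Rightarrow> nat \<Rightarrow> bool" where
  "has_cp_decomposition A s \<longleftrightarrow> (\<exists>u1 u2 u3 u4 :: nat \<Rightarrow> complex^'n.
      A = (\<lambda>a b c d. \<Sum>i<s. u1 i $ a * u2 i $ b * u3 i $ c * u4 i $ d))"

lemma cp_rank_le: "has_cp_decomposition A s \<Longrightarrow> cp_rank A \<le> s"
  unfolding cp_rank_def has_cp_decomposition_def by (rule Least_le)

lemma has_cp_decomposition_cp_rank: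
  "has_cp_decomposition A s \<Longrightarrow> has_cp_decomposition A (cp_rank A)"
  unfolding cp_rank_def has_cp_decomposition_def by (rule LeastI)

lemma has_cp_decomposition_sum:
  fixes A :: "('n::finite) tensor4" and u1 u2 u3 u4 :: "'i \<Rightarrow> complex^'n"
  assumes "finite I" "A = (\<lambda>a b c d. \<Sum>i\<in>I. u1 i $ a * u2 i $ b * u3 i $ c * u4 i $ d)"
  shows "has_cp_decomposition A (card I)"
proof -
  obtain f where f: "bij_betw f {..<card I} I"
    using ex_bij_betw_nat_finite[OF assms(1)] by (auto simp: lessThan_atLeast0)
  have "A = (\<lambda>a b c d. \<Sum>i<card I. (u1 \<circ> f) i $ a * (u2 \<circ> f) i $ b * (u3 \<circ> f) i $ c * (u4 \<circ> f) i $ d)"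
    unfolding assms(2) o_def by (intro ext, subst sum.reindex_bij_betw[OF f, symmetric]) (rule refl)
  then show ?thesis unfolding has_cp_decomposition_def by blast
qed

lemma has_cp_decomposition_swap:
  assumes "has_cp_decomposition A s"
  shows "has_cp_decomposition (\<lambda>a b c d. A c a d b) s"
proof -
  obtain u1 u2 u3 u4 where A: "A = (\<lambda>a b c d. \<Sum>i<s. u1 i $ a * u2 i $ b * u3 i $ c * u4 i $ d)"
    using assms unfolding has_cp_decomposition_def by blast
  have "(\<lambda>a b c d. A c a d b) = (\<lambda>a b c d. \<Sum>i<s. u2 i $ a * u4 i $ b * u1 i $ c * u3 i $ d)"
    unfolding A by (intro ext sum.cong) (auto simp: mult_ac)
  then show ?thesis unfolding has_cp_decomposition_def by blast
qed

definition unfolding_columns :: "('n::finite) tensor4 \<Rightarrow> (complex^('n \<times> 'n)) set" where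
  "unfolding_columns A = range (\<lambda>q. \<chi> p. A (fst p) (snd p) (fst q) (snd q))"

lemma dim_unfolding_columns_le:
  assumes "has_cp_decomposition A s"
  shows "vec.dim (unfolding_columns A) \<le> s"
proof -
  obtain u1 u2 u3 u4 where A: "A = (\<lambda>a b c d. \<Sum>i<s. u1 i $ a * u2 i $ b * u3 i $ c * u4 i $ d)"
    using assms unfolding has_cp_decomposition_def by blast
  define w where "w k = (\<chi> p. u1 k $ fst p * u2 k $ snd p)" for k
  have "(\<chi> p. A (fst p) (snd p) c d) = (\<Sum>k<s. (u3 k $ c * u4 k $ d) *s w k)" for c d
    by (simp add: vec_eq_iff A w_def ac_simps)
  moreover have "(\<Sum>k<s. (u3 k $ c * u4 k $ d) *s w k) \<in> vec.span (w ` {..<s})" for c d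
    by (intro vec.span_sum vec.span_scale vec.span_base) auto
  ultimately have "unfolding_columns A \<subseteq> vec.span (w ` {..<s})"
    unfolding unfolding_columns_def by auto
  then have "vec.dim (unfolding_columns A) \<le> card (w ` {..<s})" by (simp add: vec.dim_le_card)
  also have "\<dots> \<le> s" using card_image_le[of "{..<s}" w] by simp
  finally show ?thesis .
qed

lemma card_le_cp_length:
  fixes F :: "'i \<Rightarrow> complex^('n::finite \<times> 'n)"
  assumes "has_cp_decomposition A s" and "finite I" and "independent_family F I"
    and "\<And>i. i \<in> I \<Longrightarrow> F i \<in> vec.span (unfolding_columns A)"
  shows "card I \<le> s"
proof -
  have "card I = card (F ` I)" using independent_family_inj_on[OF assms(2,3)] by (simp add: card_image)
  also have "\<dots> \<le> vec.dim (vec.span (unfolding_columns A))"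
    using assms(4) independent_family_image[OF assms(2,3)] by (intro vec.independent_card_le_dim) auto
  also have "\<dots> \<le> s" using dim_unfolding_columns_le[OF assms(1)] by simp
  finally show ?thesis .
qed

definition kron_conj_sum :: "(nat \<Rightarrow> complex) \<Rightarrow> (nat \<Rightarrow> complex^'n^'n) \<Rightarrow> nat \<Rightarrow> ('n::finite) tensor4" where
  "kron_conj_sum w E r = (\<lambda>a b c d. \<Sum>i<r. w i * (E i $ a $ b * cnj (E i $ c $ d)))"

lemma has_cp_decomposition_kron_conj_sum:
  fixes E :: "nat \<Rightarrow> complex^'n::finite^'n"
  shows "has_cp_decomposition (kron_conj_sum w E r) (\<Sum>i<r. rank (E i) ^ 2)"
proof -
  have "\<exists>x y. \<forall>a b. E i $ a $ b = (\<Sum>k<rank (E i). x k $ a * y k $ b)" for i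
    by (rule rank_decomposition)
  then obtain X Y :: "nat \<Rightarrow> nat \<Rightarrow> complex^'n"
    where XY: "\<And>i a b. E i $ a $ b = (\<Sum>k<rank (E i). X i k $ a * Y i k $ b)"
    by metis
  define S where "S = Sigma {..<r} (\<lambda>i. {..<rank (E i)} \<times> {..<rank (E i)})"
  define T where "T i k l a b c d =
    w i * X i k $ a * Y i k $ b * cnj (X i l $ c) * cnj (Y i l $ d)" for i k l a b c d
  have summand: "w i * (E i $ a $ b * cnj (E i $ c $ d)) =
      (\<Sum>(k, l)\<in>{..<rank (E i)} \<times> {..<rank (E i)}. T i k l a b c d)" for i a b c d
  proof -
    have "E i $ a $ b * cnj (E i $ c $ d) = (\<Sum>k<rank (E i). \<Sum>l<rank (E i).
        (X i k $ a * Y i k $ b) * cnj (X i l $ c * Y i l $ d))"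
      by (simp only: XY cnj_sum sum_product)
    then show ?thesis
      by (simp add: sum.cartesian_product[symmetric] T_def sum_distrib_left mult.assoc)
  qed
  have "kron_conj_sum w E r = (\<lambda>a b c d. \<Sum>q\<in>S. T (fst q) (fst (snd q)) (snd (snd q)) a b c d)"
    unfolding kron_conj_sum_def summand S_def by (subst sum.Sigma) (auto simp: case_prod_beta')
  also have "\<dots> = (\<lambda>a b c d. \<Sum>q\<in>S. (w (fst q) *s X (fst q) (fst (snd q))) $ a
      * Y (fst q) (fst (snd q)) $ b * (\<chi> c. cnj (X (fst q) (snd (snd q)) $ c)) $ c
      * (\<chi> d. cnj (Y (fst q) (snd (snd q)) $ d)) $ d)"
    by (simp add: T_def)
  finally have "has_cp_decomposition (kron_conj_sum w E r) (card S)"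
    by (rule has_cp_decomposition_sum[rotated]) (simp add: S_def)
  moreover have "card S = (\<Sum>i<r. rank (E i) ^ 2)"
    unfolding S_def by (simp add: card_SigmaI power2_eq_square)
  ultimately show ?thesis by simp
qed

lemma cp_rank_kron_conj_sum_le:
  fixes E :: "nat \<Rightarrow> complex^'n::finite^'n"
  shows "cp_rank (kron_conj_sum w E r) \<le> (\<Sum>i<r. rank (E i) ^ 2)"
  by (rule cp_rank_le[OF has_cp_decomposition_kron_conj_sum])

lemma sum_UNIV_prod:
  "(\<Sum>q\<in>UNIV. f q) = (\<Sum>a\<in>UNIV. \<Sum>b\<in>UNIV. f (a, b))"
  for f :: "'a::finite \<times> 'b::finite \<Rightarrow> 'c::comm_monoid_add"
  by (simp add: sum.cartesian_product)

lemma kron_conj_sum_contract: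
  fixes E :: "nat \<Rightarrow> complex^'n::finite^'n"
  assumes orth: "\<forall>i<r. \<forall>j<r. minner (E i) (E j) = (if i = j then 1 else 0)" and j: "j < r"
  shows "(\<Sum>q\<in>UNIV. E j $ fst q $ snd q *s (\<chi> p. kron_conj_sum w E r (fst p) (snd p) (fst q) (snd q)))
    = w j *s vec_of_matrix (E j)"
proof (rule vec_eq_iff[THEN iffD2], rule allI)
  fix p :: "'n \<times> 'n"
  obtain a b where p: "p = (a, b)" by fastforce
  have "(\<Sum>q\<in>UNIV. E j $ fst q $ snd q * kron_conj_sum w E r a b (fst q) (snd q))
      = (\<Sum>i<r. w i * E i $ a $ b * minner (E j) (E i))"
    unfolding sum_UNIV_prod kron_conj_sum_def minner_def sum_distrib_left sum_distrib_right
    by (subst sum.swap, rule sum.cong, simp, subst sum.swap) (simp add: sum_distrib_left mult_ac)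
  also have "\<dots> = (\<Sum>i<r. if i = j then w j * E j $ a $ b else 0)"
    by (rule sum.cong) (use orth j in auto)
  also have "\<dots> = w j * E j $ a $ b"
    using j by simp
  finally show "(\<Sum>q\<in>UNIV. E j $ fst q $ snd q *s
      (\<chi> p. kron_conj_sum w E r (fst p) (snd p) (fst q) (snd q))) $ p = (w j *s vec_of_matrix (E j)) $ p"
    by (simp add: p vec_of_matrix_def)
qed

lemma cp_rank_kron_conj_sum_ge:
  fixes E :: "nat \<Rightarrow> complex^'n::finite^'n"
  assumes orth: "\<forall>i<r. \<forall>j<r. minner (E i) (E j) = (if i = j then 1 else 0)"
    and w: "\<forall>i<r. w i \<noteq> 0"
  shows "r \<le> cp_rank (kron_conj_sum w E r)"
proof -
  have dec: "has_cp_decomposition (kron_conj_sum w E r) (cp_rank (kron_conj_sum w E r))"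
    by (rule has_cp_decomposition_cp_rank[OF has_cp_decomposition_kron_conj_sum])
  have "vec_of_matrix (E j) \<in> vec.span (unfolding_columns (kron_conj_sum w E r))" if j: "j < r" for j
  proof -
    have "vec_of_matrix (E j) = (1 / w j) *s (\<Sum>q\<in>UNIV. E j $ fst q $ snd q *s
        (\<chi> p. kron_conj_sum w E r (fst p) (snd p) (fst q) (snd q)))"
      using w j by (simp add: kron_conj_sum_contract[OF orth j])
    also have "\<dots> \<in> vec.span (unfolding_columns (kron_conj_sum w E r))"
      unfolding unfolding_columns_def
      by (intro vec.span_scale vec.span_sum vec.span_base) auto
    finally show ?thesis .
  qed
  moreover have "independent_family (\<lambda>i. vec_of_matrix (E i)) {..<r}"
    using orth by (intro independent_family_orthonormal) auto
  ultimately have "card {..<r} \<le> cp_rank (kron_conj_sum w E r)"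
    by (intro card_le_cp_length[OF dec]) auto
  then show ?thesis by simp
qed

text \<open>Regrouping the indices as ((a,c),(b,d)) turns the unfolding into the Kronecker product
  of E and its conjugate, whose rank is (rank E)^2.\<close>
lemma rank_square_le_cp_length:
  fixes E :: "complex^'n::finite^'n"
  assumes w: "w \<noteq> 0" and dec: "has_cp_decomposition (\<lambda>a b c d. w * (E $ a $ b * cnj (E $ c $ d))) s"
  shows "rank E ^ 2 \<le> s"
proof -
  let ?R = "rank E"
  obtain g :: "nat \<Rightarrow> complex^'n" and h
    where gh: "\<And>k. k < ?R \<Longrightarrow> g k = row (h k) E" and g: "independent_family g {..<?R}"
    using obtain_row_basis by metis
  let ?A = "\<lambda>a b c d. w * (E $ c $ a * cnj (E $ d $ b))"
  have dec': "has_cp_decomposition ?A s"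
    using has_cp_decomposition_swap[OF dec] by simp
  define F where "F = (\<lambda>(i, j). \<chi> p. g i $ fst p * (\<chi> a. cnj (g j $ a)) $ snd p)"
  have "card ({..<?R} \<times> {..<?R}) \<le> s"
  proof (rule card_le_cp_length[OF dec' _ _ _])
    show "independent_family F ({..<?R} \<times> {..<?R})"
      unfolding F_def by (intro independent_family_outer independent_family_cnj g) auto
  next
    fix q assume "q \<in> {..<?R} \<times> {..<?R}"
    then obtain i j where ij: "q = (i, j)" "i < ?R" "j < ?R" by blast
    have "F q = (1 / w) *s (\<chi> p. ?A (fst p) (snd p) (h i) (h j))"
      using w by (simp add: vec_eq_iff F_def ij gh row_def)
    also have "\<dots> \<in> vec.span (unfolding_columns ?A)"
      unfolding unfolding_columns_def
      by (intro vec.span_scale vec.span_base) (auto intro: range_eqI[of _ _ "(h i, h j)"])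
    finally show "F q \<in> vec.span (unfolding_columns ?A)" .
  qed simp
  then show ?thesis by (simp add: power2_eq_square)
qed

lemma cp_rank_kron_conj:
  fixes E :: "complex^'n::finite^'n"
  assumes "w \<noteq> 0"
  shows "cp_rank (\<lambda>a b c d. w * (E $ a $ b * cnj (E $ c $ d))) = rank E ^ 2"
proof -
  have single: "(\<lambda>a b c d. w * (E $ a $ b * cnj (E $ c $ d))) = kron_conj_sum (\<lambda>_. w) (\<lambda>_. E) 1"
    by (simp add: kron_conj_sum_def)
  show ?thesis
    unfolding single
  proof (rule antisym)
    show "cp_rank (kron_conj_sum (\<lambda>_. w) (\<lambda>_. E) 1) \<le> rank E ^ 2"
      using cp_rank_kron_conj_sum_le[of "\<lambda>_. w" "\<lambda>_. E" 1] by simp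
    show "rank E ^ 2 \<le> cp_rank (kron_conj_sum (\<lambda>_. w) (\<lambda>_. E) 1)"
      using has_cp_decomposition_cp_rank[OF has_cp_decomposition_kron_conj_sum, of "\<lambda>_. w" "\<lambda>_. E" 1]
      by (intro rank_square_le_cp_length[OF assms]) (simp add: single)
  qed
qed

lemma kron_conj_sum_rank_one:
  fixes E :: "nat \<Rightarrow> complex^'n::finite^'n"
  assumes sym: "\<forall>i<r. transpose (E i) = E i" and rank1: "\<forall>i<r. rank (E i) = 1"
    and orth: "\<forall>i<r. \<forall>j<r. minner (E i) (E j) = (if i = j then 1 else 0)"
  obtains p where
    "kron_conj_sum w E r = (\<lambda>a b c d. \<Sum>i<r. w i * (p i $ a * p i $ b * cnj (p i $ c) * cnj (p i $ d)))"
    and "\<And>i j. i < r \<Longrightarrow> j < r \<Longrightarrow> i \<noteq> j \<Longrightarrow> hprod (p i) (p j) = 0"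
proof -
  have "\<forall>i<r. \<exists>q. \<forall>a b. E i $ a $ b = q $ a * q $ b"
    using sym rank1 by (metis symmetric_rank_one_eq_outer_square)
  then obtain p where p: "\<And>i a b. i < r \<Longrightarrow> E i $ a $ b = p i $ a * p i $ b" by metis
  have "kron_conj_sum w E r =
      (\<lambda>a b c d. \<Sum>i<r. w i * (p i $ a * p i $ b * cnj (p i $ c) * cnj (p i $ d)))"
    unfolding kron_conj_sum_def by (intro ext sum.cong) (simp_all add: p mult.assoc)
  moreover have "hprod (p i) (p j) = 0" if "i < r" "j < r" "i \<noteq> j" for i j
    using minner_outer_squares[of "E i" "p i" "E j" "p j"] orth p that by simp
  ultimately show ?thesis by (rule that)
qed

theorem corollary4p8:
  fixes A :: "('n::finite) tensor4"
    and r :: nat and lam :: "nat \<Rightarrow> real" and E :: "nat \<Rightarrow> complex^'n^'n"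
  assumes cps: "CPS A"
    and r_def: "r = rank_m A"
    and decomp: "A = (\<lambda>a b c d. \<Sum>i<r. complex_of_real (lam i) * kron (E i) (mconj (E i)) a b c d)"
    and lam_nz: "\<forall>i<r. lam i \<noteq> 0"
    and sym: "\<forall>i<r. transpose (E i) = E i"
    and orth: "\<forall>i<r. \<forall>j<r. minner (E i) (E j) = (if i = j then 1 else 0)"
  shows "((\<forall>i<r. rank (E i) = 1) \<longrightarrow>
           (\<exists>(lam' :: nat \<Rightarrow> real) (p :: nat \<Rightarrow> complex^'n).
              A = (\<lambda>a b c d. \<Sum>i<r. complex_of_real (lam' i) *
                      (p i $ a * p i $ b * cnj (p i $ c) * cnj (p i $ d))) \<and>
              (\<forall>i<r. \<forall>j<r. i \<noteq> j \<longrightarrow> hprod (p i) (p j) = 0)))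
       \<and> (\<forall>R. R = Max ((\<lambda>i. rank (E i)) ` {..<r}) \<longrightarrow>
              r \<le> cp_rank A \<and> cp_rank A \<le> r * R^2)
       \<and> (r = 1 \<longrightarrow> cp_rank A = (rank (E 0))^2)"
proof -
  have A: "A = kron_conj_sum (\<lambda>i. complex_of_real (lam i)) E r"
    by (simp add: decomp kron_conj_sum_def kron_def mconj_def)
  have rank_one: "\<exists>lam' p. A = (\<lambda>a b c d. \<Sum>i<r. complex_of_real (lam' i) *
      (p i $ a * p i $ b * cnj (p i $ c) * cnj (p i $ d))) \<and>
      (\<forall>i<r. \<forall>j<r. i \<noteq> j \<longrightarrow> hprod (p i) (p j) = 0)" if rank1: "\<forall>i<r. rank (E i) = 1"
  proof -
    obtain p where "A = (\<lambda>a b c d. \<Sum>i<r. complex_of_real (lam i) *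
        (p i $ a * p i $ b * cnj (p i $ c) * cnj (p i $ d)))"
      and "\<And>i j. i < r \<Longrightarrow> j < r \<Longrightarrow> i \<noteq> j \<Longrightarrow> hprod (p i) (p j) = 0"
      using kron_conj_sum_rank_one[OF sym rank1 orth, of "\<lambda>i. complex_of_real (lam i)"]
      unfolding A by blast
    then show ?thesis by (intro exI[of _ lam] exI[of _ p]) blast
  qed
  have lower: "r \<le> cp_rank A"
    unfolding A using orth lam_nz by (intro cp_rank_kron_conj_sum_ge) auto
  have upper: "cp_rank A \<le> r * R^2" if R: "R = Max ((\<lambda>i. rank (E i)) ` {..<r})" for R
  proof -
    have "(\<Sum>i<r. rank (E i) ^ 2) \<le> (\<Sum>i<r. R ^ 2)"
      unfolding R by (intro sum_mono power_mono Max_ge) auto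
    then show ?thesis
      using cp_rank_kron_conj_sum_le[of "\<lambda>i. complex_of_real (lam i)" E r] by (simp add: A)
  qed
  have "cp_rank A = rank (E 0) ^ 2" if "r = 1"
    using cp_rank_kron_conj[of "complex_of_real (lam 0)" "E 0"] lam_nz that
    by (simp add: A kron_conj_sum_def)
  with rank_one lower upper show ?thesis by blast
qed

end
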